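(* Let $C$ be a nonzero $A$-code of length $l$, let $G$ be a matrix whose rows form a basis of divisors of $C$, and let $H$ be the output of the algorithm gen-mat-dual on input $G$. Let $\tilde H$ be the matrix obtained from $H$ by deleting its zero rows, say with $r$ rows, and let $H^R$ be the $r\times l$ matrix with entries $h^R_{ij}=\tilde h_{r-i+1,\,l-j+1}$. Then $H^R$ is the canonical generator matrix of the reciprocal dual $C^{\perp R}=\{(c_l,\ldots,c_1):(c_1,\ldots,c_l)\in C^\perp\}$.
   Context: Let $\mathbb{F}$ be a finite field, $f(x)\in\mathbb{F}[x]$ monic of degree $m$, $A=\mathbb{F}[x]/\langle f(x)\rangle$, elements identified with polynomials of degree $<m$. An $A$-code of length $l$ is an $A$-submodule of $A^l$; $C^\perp=\{a\in A^l:\sum_ia_ic_i=0\ \forall c\in C\}$. For $u\in A^l$, $L_{\mathrm{ind}}(u)$ is the smallest index of a nonzero entry and $L_{\mathrm{coef}}(u)$ that entry. For nonzero $C$, $L_{\mathrm{ind}}(C)=\min_{u\in C}L_{\mathrm{ind}}(u)$; $L_{\mathrm{coef}}(C)$ is the monic polynomial $g$ of minimal degree such that some $c\in C$ has $L_{\mathrm{ind}}(c)=L_{\mathrm{ind}}(C)$ and $L_{\mathrm{coef}}(c)=g$; such $c$ is a leading element. $C^{(1)}=C$, $C^{(n+1)}=\{c\in C^{(n)}:L_{\mathrm{ind}}(c)>L_{\mathrm{ind}}(C^{(n)})\}$ while $C^{(n)}\neq0$; with $k$ largest such that $C^{(k)}\ne0$, a tuple $(g^{(1)},\dots,g^{(k)})$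 with $g^{(j)}$ a leading element of $C^{(j)}$ is a basis of divisors (leading coefficients are then monic divisors of $f$). The canonical generator matrix (CGM) of a nonzero $A$-code is the unique matrix whose rows $g^{(1)},\dots,g^{(k)}$ form a basis of divisors and satisfy $\deg g_{t,j_i}<\deg g_{i,j_i}$ for all $t<i$, where $g_{i,j_i}$ is the leading coefficient of row $i$. Algorithm gen-mat-dual, on input a $k\times l$ matrix $G=(g_{ij})$ whose rows form a basis of divisors of an $A$-code, returns $H$ defined recursively: (1) If the first column of $G$ is zero: if $l=1$, $H=(1)$; otherwise $H=\begin{pmatrix}1&0\\0&H'\end{pmatrix}$, where $H'$ is the output on $G$ with its first column deleted. (2) Otherwise: if $l=1$, $H=(h_{1,1})$ where $h_{1,1}$ is the image in $A$ of $f/g_{1,1}$. If $l>1$: let $H'=I_{l-1}$ if $k=1$, and otherwise let $H'$ be the output on $G$ with its first row and first column deleted; index the entries of $H'$ as $h'_{ij}$, $2\le i\le s$, $2\le j\le l$. Then $H$ has first row $(h_{1,1},0,\ldots,0)$ with $h_{1,1}$ the image of $f/g_{1,1}$, and for $2\le i\le s$ its $i$-th row is $(\alpha_i,h'_{i2},\ldots,h'_{il})$, where $\alpha_i$ is the remainder modulo the polynomial $f/g_{1,1}$ of the polynomial $-\bigl(\sum_{j=2}^l h'_{ij}g_{1j}\bigr)/g_{1,1}$ (entries regarded as polynomials of degree $<m$; this quotient is a polynomial). *)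

theory Defs
  imports "HOL-Computational_Algebra.Polynomial"
begin

text \<open>A = F[x]/(f) with elements represented by polynomials p with
 p mod f = p (i.e. degree < m). Vectors of A^l are lists of length l, indices are
 0-based (index i here = index i+1 in the paper). Matrices are lists of rows.\<close>

definition inA :: "'a::field poly \<Rightarrow> 'a poly \<Rightarrow> bool" where
  "inA f p \<longleftrightarrow> p mod f = p"

definition vecA :: "'a::field poly \<Rightarrow> nat \<Rightarrow> 'a poly list set" where
  "vecA f l = {u. length u = l \<and> (\<forall>x\<in>set u. inA f x)}"

definition A_code :: "'a::field poly \<Rightarrow> nat \<Rightarrow> 'a poly list set \<Rightarrow> bool" where
  "A_code f l C \<longleftrightarrow> C \<subseteq> vecA f l \<and> replicate l 0 \<in> C
     \<and> (\<forall>u\<in>C. \<forall>v\<in>C. map2 (+) u v \<in> C)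
     \<and> (\<forall>a. inA f a \<longrightarrow> (\<forall>u\<in>C. map (\<lambda>x. (a * x) mod f) u \<in> C))"

definition dualA :: "'a::field poly \<Rightarrow> nat \<Rightarrow> 'a poly list set \<Rightarrow> 'a poly list set" where
  "dualA f l C = {a \<in> vecA f l. \<forall>c\<in>C. (\<Sum>i<l. a ! i * c ! i) mod f = 0}"

definition recip_dual :: "'a::field poly \<Rightarrow> nat \<Rightarrow> 'a poly list set \<Rightarrow> 'a poly list set" where
  "recip_dual f l C = rev ` dualA f l C"

definition nzv :: "'a::zero list \<Rightarrow> bool" where
  "nzv u \<longleftrightarrow> (\<exists>x\<in>set u. x \<noteq> 0)"

text \<open>L_ind of a vector; the zero vector gets index length u (playing the role of infinity).\<close>
definition lind :: "'a::zero list \<Rightarrow> nat" where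
  "lind u = (if nzv u then (LEAST i. i < length u \<and> u ! i \<noteq> 0) else length u)"

definition lcoef :: "'a::zero list \<Rightarrow> 'a" where
  "lcoef u = u ! lind u"

definition lindC :: "'a::zero list set \<Rightarrow> nat" where
  "lindC C = (LEAST i. \<exists>u\<in>C. nzv u \<and> lind u = i)"

definition leading_elem :: "'a::field poly list set \<Rightarrow> 'a poly list \<Rightarrow> bool" where
  "leading_elem C c \<longleftrightarrow> c \<in> C \<and> nzv c \<and> lind c = lindC C \<and> lead_coeff (lcoef c) = 1
     \<and> (\<forall>d\<in>C. nzv d \<and> lind d = lindC C \<and> lead_coeff (lcoef d) = 1
            \<longrightarrow> degree (lcoef c) \<le> degree (lcoef d))"

text \<open>filt C n is C^{(n+1)} of the paper.\<close>
primrec filt :: "'a::zero list set \<Rightarrow> nat \<Rightarrow> 'a list set" where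
  "filt C 0 = C"
| "filt C (Suc n) = {c \<in> filt C n. lind c > lindC (filt C n)}"

definition basis_div :: "'a::field poly list set \<Rightarrow> 'a poly list list \<Rightarrow> bool" where
  "basis_div C G \<longleftrightarrow> (\<forall>j<length G. leading_elem (filt C j) (G ! j))
     \<and> (\<forall>u\<in>filt C (length G). \<not> nzv u)"

text \<open>Canonical generator matrix (a zero polynomial counts as degree -infinity).\<close>
definition is_CGM :: "'a::field poly list set \<Rightarrow> 'a poly list list \<Rightarrow> bool" where
  "is_CGM C G \<longleftrightarrow> basis_div C G \<and>
     (\<forall>i<length G. \<forall>t<i. G ! t ! lind (G ! i) = 0 \<or>
         degree (G ! t ! lind (G ! i)) < degree (G ! i ! lind (G ! i)))"

definition idmat :: "nat \<Rightarrow> 'a::{zero,one} list list" where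
  "idmat n = map (\<lambda>i. map (\<lambda>j. if i = j then 1 else 0) [0..<n]) [0..<n]"

text \<open>Algorithm gen-mat-dual; second argument is the length l (number of columns).\<close>
fun gen_mat_dual :: "'a::field poly \<Rightarrow> nat \<Rightarrow> 'a poly list list \<Rightarrow> 'a poly list list" where
  "gen_mat_dual f 0 G = []"
| "gen_mat_dual f (Suc l') G =
    (if (\<forall>r\<in>set G. hd r = 0) then
       (if l' = 0 then [[1]]
        else (1 # replicate l' 0) # map (\<lambda>r. 0 # r) (gen_mat_dual f l' (map tl G)))
     else
       (let g11 = hd (hd G); h11 = (f div g11) mod f in
        if l' = 0 then [[h11]]
        else
          (let H' = (if length G = 1 then idmat l' else gen_mat_dual f l' (map tl (tl G)))
           in (h11 # replicate l' 0) #
              map (\<lambda>hr. ((- (\<Sum>j<l'. hr ! j * tl (hd G) ! j)) div g11) mod (f div g11) # hr) H')))"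

end

theory Submission
  imports Defs
begin

text \<open>
  The algorithm recurses on the first column. Let \<open>C'\<close> be the shortened code (the codewords
  with first entry 0, that entry deleted). If every codeword starts with 0, the dual words are
  exactly the \<open>x # a\<close> with \<open>a\<close> dual to \<open>C'\<close>. Otherwise the first row \<open>g # gs\<close> of the basis
  of divisors has a monic first entry \<open>g\<close> of minimal degree; division with remainder shows that
  \<open>g\<close> divides \<open>f\<close> and the first entry of every codeword, and then \<open>x # a\<close> is dual iff
  \<open>a\<close> is dual to \<open>C'\<close> and \<open>f\<close> divides \<open>x g + \<Sum>\<^sub>j a\<^sub>j gs\<^sub>j\<close>. By induction the output \<open>H\<close> is a
  lower triangular matrix of dual words whose diagonal entries are monic or zero (and then the
  whole row is zero), whose entries are reduced modulo the diagonal entry above them, and whose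
  \<open>i\<close>-th diagonal entry divides the \<open>i\<close>-th entry of every dual word vanishing beyond position
  \<open>i\<close>. Reversing rows and columns gives the mirror image of these properties for \<open>C\<^sup>\<perp>\<^sup>R\<close>, and
  the nonzero rows of a matrix of that shape are exactly the canonical generator matrix.
\<close>

section \<open>Leading indices\<close>

lemma nzv_iff: "nzv u \<longleftrightarrow> (\<exists>i<length u. u!i \<noteq> 0)"
  unfolding nzv_def by (metis in_set_conv_nth)

lemma nzv_Cons_0 [simp]: "nzv (0 # u) = nzv u"
  by (simp add: nzv_def)

lemma nzv_rev [simp]: "nzv (rev u) = nzv u"
  by (simp add: nzv_def)

lemma lind_nzv:
  assumes "nzv u"
  shows "lind u < length u \<and> u!(lind u) \<noteq> 0 \<and> (\<forall>j<lind u. u!j = 0)"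
proof -
  have ex: "\<exists>i. i < length u \<and> u!i \<noteq> 0" using assms nzv_iff by blast
  have lind: "lind u = (LEAST i. i < length u \<and> u!i \<noteq> 0)" using assms by (simp add: lind_def)
  show ?thesis
    using LeastI_ex[OF ex] not_less_Least[of _ "\<lambda>i. i < length u \<and> u!i \<noteq> 0"]
    unfolding lind[symmetric] by auto
qed

lemma lind_eqI:
  assumes "i < length u" "u!i \<noteq> 0" "\<forall>j<i. u!j = 0"
  shows "lind u = i"
  using lind_nzv[of u] assms nzv_iff by (meson linorder_neqE_nat)

lemma lind_Cons_0: "lind (0 # u) = Suc (lind u)"
proof (cases "nzv u")
  case True
  then show ?thesis
    using lind_nzv[OF True] by (intro lind_eqI) (auto simp: less_Suc_eq_0_disj)
qed (simp add: lind_def)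

lemma lcoef_Cons_0 [simp]: "lcoef (0 # u) = lcoef u"
  by (simp add: lcoef_def lind_Cons_0)

lemma lind_eq_0_iff:
  assumes "u \<noteq> []"
  shows "lind u = 0 \<longleftrightarrow> hd u \<noteq> 0"
proof
  assume "lind u = 0"
  then show "hd u \<noteq> 0"
    using assms lind_nzv[of u] by (cases u) (auto simp: lind_def split: if_splits)
next
  assume "hd u \<noteq> 0"
  then show "lind u = 0"
    using assms by (intro lind_eqI) (auto simp: hd_conv_nth)
qed

lemma lcoef_eq_hd: "u \<noteq> [] \<Longrightarrow> hd u \<noteq> 0 \<Longrightarrow> lcoef u = hd u"
  using lind_eq_0_iff[of u] by (simp add: lcoef_def hd_conv_nth)

lemma lind_map:
  assumes "\<And>x. h x = 0 \<longleftrightarrow> x = 0"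
  shows "lind (map h u) = lind u"
proof -
  have "(\<lambda>i. i < length (map h u) \<and> map h u ! i \<noteq> 0) = (\<lambda>i. i < length u \<and> u ! i \<noteq> 0)"
    using assms by auto
  then show ?thesis using assms by (simp add: lind_def nzv_def)
qed

lemma lindC_eqI:
  assumes "u \<in> X" "nzv u" "\<forall>v\<in>X. nzv v \<longrightarrow> lind u \<le> lind v"
  shows "lindC X = lind u"
  unfolding lindC_def by (rule Least_equality) (use assms in auto)

lemma filt_subset: "filt C j \<subseteq> C"
  by (induction j) auto

section \<open>Bases of divisors\<close>

definition leading_at :: "'a::field poly list set \<Rightarrow> 'a poly list \<Rightarrow> bool" where
  "leading_at C g \<longleftrightarrow> g \<in> C \<and> nzv g \<and> lead_coeff (lcoef g) = 1 \<and>
     (\<forall>d\<in>C. nzv d \<and> lind d = lind g \<and> lead_coeff (lcoef d) = 1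
        \<longrightarrow> degree (lcoef g) \<le> degree (lcoef d))"

definition pivot_basis :: "'a::field poly list set \<Rightarrow> 'a poly list list \<Rightarrow> bool" where
  "pivot_basis C G \<longleftrightarrow> sorted_wrt (<) (map lind G) \<and> (\<forall>g\<in>set G. leading_at C g) \<and>
     (\<forall>c\<in>C. nzv c \<longrightarrow> (\<exists>g\<in>set G. lind c = lind g))"

lemma in_filt_nzv_iff:
  assumes "\<forall>i<j. lindC (filt C i) = lind (G!i)"
  shows "c \<in> filt C j \<and> nzv c \<longleftrightarrow> c \<in> C \<and> nzv c \<and> (\<forall>i<j. lind (G!i) < lind c)"
  using assms by (induction j) (auto simp: less_Suc_eq)

lemma basis_div_imp_pivot_basis:
  assumes B: "basis_div C G"
  shows "pivot_basis C G"
proof -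
  have lead: "leading_elem (filt C j) (G!j)" if "j < length G" for j
    using B that by (simp add: basis_div_def)
  have lindC: "\<forall>i<j. lindC (filt C i) = lind (G!i)" if "j \<le> length G" for j
    using lead that by (auto simp: leading_elem_def)
  have G_filt: "G!j \<in> filt C j" "nzv (G!j)" if "j < length G" for j
    using lead[OF that] by (auto simp: leading_elem_def)
  have lind_less: "lind (G!i) < lind (G!j)" if ij: "i < j" "j < length G" for i j
    using G_filt[of j] in_filt_nzv_iff[OF lindC[of j], of "G!j"] ij by simp
  have "leading_at C (G!j)" if j: "j < length G" for j
  proof -
    have "d \<in> filt C j" if "d \<in> C" "nzv d" "lind d = lind (G!j)" for d
      using that lind_less j in_filt_nzv_iff[OF lindC[of j], of d] by auto
    then show ?thesis
      using lead[OF j] filt_subset[of C j] by (auto simp: leading_at_def leading_elem_def)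
  qed
  moreover have "\<exists>g\<in>set G. lind c = lind g" if c: "c \<in> C" "nzv c" for c
  proof (rule ccontr)
    assume none: "\<not> ?thesis"
    have "c \<in> filt C j" if "j \<le> length G" for j
      using that
    proof (induction j)
      case (Suc j)
      then have j: "j < length G" and cj: "c \<in> filt C j" by simp_all
      have "lindC (filt C j) \<le> lind c"
        unfolding lindC_def by (intro Least_le) (use c cj in auto)
      moreover have "lindC (filt C j) = lind (G!j)" using lindC[of "Suc j"] j by simp
      moreover have "lind c \<noteq> lind (G!j)" using none j by auto
      ultimately show ?case using cj by simp
    qed (use c in simp)
    then show False using B c by (auto simp: basis_div_def)
  qed
  ultimately show ?thesis
    using lind_less by (auto simp: pivot_basis_def in_set_conv_nth sorted_wrt_iff_nth_less)
qed

lemma pivot_basis_imp_basis_div: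
  assumes P: "pivot_basis C G"
  shows "basis_div C G"
proof -
  have lind_less: "lind (G!i) < lind (G!j)" if "i < j" "j < length G" for i j
    using P that by (auto simp: pivot_basis_def sorted_wrt_iff_nth_less)
  have lead: "leading_at C (G!j)" if "j < length G" for j
    using P that by (auto simp: pivot_basis_def)
  have cover: "\<exists>k<length G. lind c = lind (G!k)" if "c \<in> C" "nzv c" for c
    using P that unfolding pivot_basis_def by (metis in_set_conv_nth)
  have nonzero_pivot: "\<exists>k\<ge>j. k < length G \<and> lind c = lind (G!k)"
    if c: "c \<in> filt C j" "nzv c" and prev: "\<forall>i<j. lindC (filt C i) = lind (G!i)" for c j
  proof -
    obtain k where k: "k < length G" "lind c = lind (G!k)"
      using cover[of c] c filt_subset[of C j] by blast
    have "\<not> k < j" using k in_filt_nzv_iff[OF prev, of c] c by auto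
    then show ?thesis using k by (intro exI[of _ k]) simp
  qed
  have lindC: "lindC (filt C j) = lind (G!j)" if "j < length G" for j
    using that
  proof (induction j rule: less_induct)
    case (less j)
    then have prev: "\<forall>i<j. lindC (filt C i) = lind (G!i)" by simp
    have "G!j \<in> filt C j \<and> nzv (G!j)"
      using in_filt_nzv_iff[OF prev, of "G!j"] lead[OF less.prems] less.prems lind_less[of _ j]
      by (auto simp: leading_at_def)
    moreover have "lind (G!j) \<le> lind v" if v: "v \<in> filt C j" "nzv v" for v
    proof -
      obtain k where "k \<ge> j" "k < length G" "lind v = lind (G!k)"
        using nonzero_pivot[OF v prev] by blast
      then show ?thesis using lind_less[of j k] by (cases "j = k") auto
    qed
    ultimately show ?case by (intro lindC_eqI) auto
  qed
  have "leading_elem (filt C j) (G!j)" if j: "j < length G" for j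
  proof -
    have "G!j \<in> filt C j"
      using in_filt_nzv_iff[of j C G "G!j"] lindC lead[OF j] lind_less j by (auto simp: leading_at_def)
    then show ?thesis
      using lead[OF j] lindC[OF j] filt_subset[of C j] by (auto simp: leading_elem_def leading_at_def)
  qed
  moreover have "\<not> nzv u" if "u \<in> filt C (length G)" for u
    using that nonzero_pivot[of u "length G"] lindC by auto
  ultimately show ?thesis
    by (simp add: basis_div_def)
qed

lemma pivot_basis_zero_column:
  assumes P: "pivot_basis C G" and ne: "\<forall>c\<in>C. c \<noteq> []" and G: "\<forall>r\<in>set G. hd r = 0"
    and c: "c \<in> C"
  shows "hd c = 0"
proof (cases "nzv c")
  case True
  then obtain r where "r \<in> set G" "lind c = lind r" using P c by (auto simp: pivot_basis_def)
  then show ?thesis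
    using P G ne c lind_eq_0_iff[of c] lind_eq_0_iff[of r] by (metis leading_at_def pivot_basis_def)
next
  case False
  then show ?thesis using ne c hd_in_set[of c] by (auto simp: nzv_def)
qed

lemma pivot_basis_pivot_column:
  assumes P: "pivot_basis C G" and ne: "\<forall>c\<in>C. c \<noteq> []" and r: "r \<in> set G" "hd r \<noteq> 0"
  obtains g gs G' where "G = (g # gs) # G'" "g \<noteq> 0" "leading_at C (g # gs)"
    "\<forall>y\<in>set G'. hd y = 0"
proof -
  have G_C: "y \<in> C" if "y \<in> set G" for y
    using P that by (auto simp: pivot_basis_def leading_at_def)
  obtain g0 G' where G: "G = g0 # G'" using r by (cases G) auto
  have sorted: "\<forall>y\<in>set G'. lind g0 < lind y"
    using P G by (simp add: pivot_basis_def)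
  have "lind r = 0" using r ne G_C lind_eq_0_iff by metis
  then have "r = g0" using r(1) sorted G by auto
  then obtain g gs where g0: "g0 = g # gs" and "g \<noteq> 0"
    using r ne G_C by (cases r) auto
  moreover have "leading_at C g0" using P G by (simp add: pivot_basis_def)
  moreover have "hd y = 0" if "y \<in> set G'" for y
    using that sorted G G_C ne lind_eq_0_iff[of y] by fastforce
  ultimately show ?thesis using that G by blast
qed

section \<open>Codes and shortened codes\<close>

lemma inA_iff:
  assumes "(f::'a::field poly) \<noteq> 0"
  shows "inA f p \<longleftrightarrow> p = 0 \<or> degree p < degree f"
  using assms degree_mod_less[of f p] mod_poly_less[of p f] unfolding inA_def by force

definition shorten :: "'a::zero list set \<Rightarrow> 'a list set" where
  "shorten C = {c. 0 # c \<in> C}"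

lemma code_length: "A_code f l C \<Longrightarrow> c \<in> C \<Longrightarrow> length c = l"
  by (auto simp: A_code_def vecA_def)

lemma code_inA: "A_code f l C \<Longrightarrow> c \<in> C \<Longrightarrow> i < l \<Longrightarrow> inA f (c!i)"
  by (auto simp: A_code_def vecA_def)

lemma code_smult:
  assumes "A_code f l C" "c \<in> C"
  shows "map (\<lambda>x. (a * x) mod f) c \<in> C"
proof -
  have "map (\<lambda>x. ((a mod f) * x) mod f) c \<in> C"
    using assms by (simp add: A_code_def inA_def)
  then show ?thesis by (simp add: mod_mult_left_eq)
qed

lemma code_add_smult:
  assumes "A_code f l C" "c \<in> C" "d \<in> C"
  shows "map2 (+) c (map (\<lambda>x. (a * x) mod f) d) \<in> C"
  using assms code_smult[OF assms(1,3)] by (simp add: A_code_def)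

lemma A_code_shorten:
  assumes "A_code f (Suc l) C"
  shows "A_code f l (shorten C)"
proof -
  have "map2 (+) u v \<in> shorten C" if "u \<in> shorten C" "v \<in> shorten C" for u v
  proof -
    have "\<forall>u\<in>C. \<forall>v\<in>C. map2 (+) u v \<in> C" using assms by (simp add: A_code_def)
    then show ?thesis using that by (fastforce simp: shorten_def)
  qed
  moreover have "map (\<lambda>x. (a * x) mod f) u \<in> shorten C" if "u \<in> shorten C" for a u
    using code_smult[OF assms, of "0 # u" a] that by (simp add: shorten_def)
  ultimately show ?thesis
    using assms by (auto simp: A_code_def shorten_def vecA_def)
qed

lemma leading_at_shorten:
  assumes "leading_at C (0 # g)"
  shows "leading_at (shorten C) g"
  using assms by (force simp: leading_at_def shorten_def lind_Cons_0)

lemma pivot_basis_shorten: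
  assumes P: "pivot_basis C G" and ne: "\<forall>c\<in>C. c \<noteq> []"
  shows "pivot_basis (shorten C) (map tl (filter (\<lambda>r. hd r = 0) G))"
proof -
  have G: "r \<in> C" if "r \<in> set G" for r
    using P that by (simp add: pivot_basis_def leading_at_def)
  have split: "r = 0 # tl r" if "r \<in> set G" "hd r = 0" for r
    using that G ne by (metis list.collapse)
  have lind_tl: "lind r = Suc (lind (tl r))" if "r \<in> set G" "hd r = 0" for r
    by (metis split[OF that] lind_Cons_0)
  have "sorted_wrt (\<lambda>r s. lind r < lind s) (filter (\<lambda>r. hd r = 0) G)"
    using P by (intro sorted_wrt_filter) (simp add: pivot_basis_def sorted_wrt_map)
  then have "sorted_wrt (\<lambda>r s. lind (tl r) < lind (tl s)) (filter (\<lambda>r. hd r = 0) G)"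
    by (rule sorted_wrt_mono_rel[rotated]) (simp add: lind_tl)
  then have sorted: "sorted_wrt (<) (map lind (map tl (filter (\<lambda>r. hd r = 0) G)))"
    by (simp add: sorted_wrt_map)
  have lead: "leading_at (shorten C) (tl r)" if "r \<in> set G" "hd r = 0" for r
    using P that split[OF that] leading_at_shorten[of C "tl r"] by (simp add: pivot_basis_def)
  have "\<exists>r\<in>set G. hd r = 0 \<and> lind c = lind (tl r)" if c: "c \<in> shorten C" "nzv c" for c
  proof -
    obtain r where r: "r \<in> set G" "lind (0 # c) = lind r"
      using P c by (auto simp: pivot_basis_def shorten_def)
    then have "hd r = 0"
      using lind_eq_0_iff[of r] ne G by (auto simp: lind_Cons_0)
    then show ?thesis
      using r lind_tl[of r] lind_Cons_0[of c] by auto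
  qed
  then show ?thesis
    using sorted lead by (auto simp: pivot_basis_def)
qed

lemma leading_at_degree_le:
  fixes f :: "'a::field poly"
  assumes C: "A_code f l C" and g: "leading_at C g"
    and w: "w \<in> C" "nzv w" "lind w = lind g"
  shows "degree (lcoef g) \<le> degree (lcoef w)"
proof -
  define k where "k = inverse (lead_coeff (lcoef w))"
  have k: "k \<noteq> 0" and w_lcoef: "lcoef w \<noteq> 0"
    using lind_nzv[OF w(2)] by (simp_all add: k_def lcoef_def)
  define v where "v = map (smult k) w"
  have "map (\<lambda>x. ([:k:] * x) mod f) w = v"
    using code_inA[OF C w(1)] code_length[OF C w(1)]
    by (auto simp: v_def mod_smult_left inA_def in_set_conv_nth intro!: map_cong)
  then have "v \<in> C"
    using code_smult[OF C w(1), of "[:k:]"] by metis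
  moreover have lind_v: "lind v = lind w"
    using k by (simp add: v_def lind_map)
  moreover have "nzv v"
    using w(2) k by (auto simp: v_def nzv_def)
  moreover have "lcoef v = smult k (lcoef w)"
    using lind_v lind_nzv[OF w(2)] by (simp add: v_def lcoef_def)
  ultimately show ?thesis
    using g w k w_lcoef by (auto simp: leading_at_def k_def)
qed

lemma leading_at_hd_degree_le:
  fixes f :: "'a::field poly"
  assumes C: "A_code f l C" and lead: "leading_at C (g # gs)" and g: "g \<noteq> 0"
    and w: "w \<in> C" "hd w \<noteq> 0"
  shows "degree g \<le> degree (hd w)"
proof -
  have w_ne: "w \<noteq> []"
    using code_length[OF C w(1)] code_length[OF C, of "g # gs"] lead by (auto simp: leading_at_def)
  then have "nzv w" "lind w = lind (g # gs)"
    using g w lind_eq_0_iff[of w] lind_eq_0_iff[of "g # gs"] by (auto simp: nzv_def)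
  then show ?thesis
    using leading_at_degree_le[OF C lead w(1)] lcoef_eq_hd[OF w_ne w(2)] lcoef_eq_hd[of "g # gs"] g
    by simp
qed

text \<open>With \<open>c = 0\<close> and \<open>y = f\<close> this shows that the pivot divides \<open>f\<close>.\<close>

lemma first_pivot_dvd:
  fixes f :: "'a::field poly"
  assumes C: "A_code f (Suc l) C" and f: "f \<noteq> 0"
    and p: "p # ps \<in> C" "p \<noteq> 0"
    and min: "\<forall>w\<in>C. hd w \<noteq> 0 \<longrightarrow> degree p \<le> degree (hd w)"
    and c: "c \<in> C" and y: "f dvd y - hd c"
  shows "p dvd y"
proof -
  obtain z c' where zc: "c = z # c'" using code_length[OF C c] by (cases c) auto
  define q where "q = y div p"
  define r where "r = y mod p"
  have "degree p < degree f"
    using code_inA[OF C p(1), of 0] p(2) inA_iff[OF f] by simp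
  then have r: "inA f r"
    unfolding r_def using degree_mod_less[OF p(2), of y] inA_iff[OF f] by fastforce
  have z: "z = y mod f"
    using code_inA[OF C c, of 0] y zc mod_eq_dvd_iff[of y f z] by (simp add: inA_def)
  define w where "w = map2 (+) c (map (\<lambda>x. (- q * x) mod f) (p # ps))"
  have "w \<in> C" unfolding w_def using code_add_smult[OF C c p(1)] .
  moreover have "hd w = r"
  proof -
    have "hd w = (y - q * p) mod f"
      using zc z by (simp add: w_def poly_mod_diff_left)
    also have "y - q * p = r" by (simp add: q_def r_def mod_div_mult_eq[symmetric] algebra_simps)
    finally show ?thesis using r by (simp add: inA_def)
  qed
  ultimately have "r = 0"
    using min degree_mod_less'[OF p(2), of y] unfolding r_def by force
  then show ?thesis by (simp add: r_def dvd_eq_mod_eq_0)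
qed

section \<open>Dual codes\<close>

lemma dualA_length: "d \<in> dualA f l C \<Longrightarrow> length d = l"
  by (simp add: dualA_def vecA_def)

lemma dualA_dvd: "d \<in> dualA f l C \<Longrightarrow> c \<in> C \<Longrightarrow> f dvd (\<Sum>i<l. d!i * c!i)"
  by (simp add: dualA_def dvd_eq_mod_eq_0)

lemma replicate_in_dualA: "replicate l 0 \<in> dualA f l C"
  by (simp add: dualA_def vecA_def inA_def)

lemma sum_lessThan_Suc_Cons:
  "(\<Sum>i<Suc n. (x # a)!i * (y # c)!i) = x * y + (\<Sum>i<n. a!i * c!i)"
  by (subst sum.lessThan_Suc_shift) simp

lemma sum_mult_mod_eq:
  fixes f :: "'a::field poly"
  shows "(\<Sum>i<n. a!i * ((b * c!i) mod f)) mod f = (b * (\<Sum>i<n. a!i * c!i)) mod f"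
proof -
  have "(\<Sum>i<n. a!i * ((b * c!i) mod f)) mod f = (\<Sum>i<n. a!i * (b * c!i)) mod f"
    by (subst mod_sum_eq[symmetric]) (simp add: mod_mult_right_eq mod_sum_eq)
  then show ?thesis by (simp add: sum_distrib_left algebra_simps)
qed

lemma Cons_dualA_shorten:
  assumes "x # a \<in> dualA f (Suc l) C"
  shows "a \<in> dualA f l (shorten C)"
proof -
  have "f dvd (\<Sum>i<l. a!i * c!i)" if "0 # c \<in> C" for c
    using dualA_dvd[OF assms that] unfolding sum_lessThan_Suc_Cons by simp
  then show ?thesis using assms by (simp add: dualA_def vecA_def shorten_def dvd_eq_mod_eq_0)
qed

lemma shorten_dual_sum_dvd:
  fixes f :: "'a::field poly"
  assumes C: "A_code f (Suc l) C" and a: "a \<in> dualA f l (shorten C)"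
    and p: "p # ps \<in> C" and yc: "p * q # c \<in> C"
  shows "f dvd (\<Sum>i<l. a!i * c!i) - q * (\<Sum>i<l. a!i * ps!i)"
proof -
  define w where "w = map (\<lambda>z. (- q * z) mod f) ps"
  have len: "length ps = l" "length c = l"
    using code_length[OF C p] code_length[OF C yc] by simp_all
  have "map2 (+) (p * q # c) (map (\<lambda>z. (- q * z) mod f) (p # ps)) \<in> C"
    using code_add_smult[OF C yc p] .
  moreover have "p * q + (- q * p) mod f = 0"
    using code_inA[OF C yc, of 0] by (simp add: inA_def algebra_simps)
  ultimately have "map2 (+) c w \<in> shorten C" by (simp add: shorten_def w_def)
  from dualA_dvd[OF a this] have "f dvd (\<Sum>i<l. a!i * (c!i + w!i))"
    using len by (simp add: w_def)
  then have cw: "f dvd (\<Sum>i<l. a!i * c!i) + (\<Sum>i<l. a!i * w!i)"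
    by (simp add: distrib_left sum.distrib)
  have "(\<Sum>i<l. a!i * w!i) mod f = (- q * (\<Sum>i<l. a!i * ps!i)) mod f"
    using sum_mult_mod_eq[where n = l and a = a and b = "- q" and c = ps and f = f] len
    by (simp add: w_def)
  then have "f dvd (\<Sum>i<l. a!i * w!i) + q * (\<Sum>i<l. a!i * ps!i)"
    unfolding mod_eq_dvd_iff by simp
  from dvd_diff[OF cw this] show ?thesis by simp
qed

lemma Cons_in_dualA_iff:
  fixes f :: "'a::field poly"
  assumes C: "A_code f (Suc l) C"
    and p: "p # ps \<in> C" and p_dvd: "\<forall>c\<in>C. p dvd hd c"
  shows "x # a \<in> dualA f (Suc l) C \<longleftrightarrow>
    inA f x \<and> a \<in> dualA f l (shorten C) \<and> f dvd (x * p + (\<Sum>i<l. a!i * ps!i))"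
proof
  assume d: "x # a \<in> dualA f (Suc l) C"
  then show "inA f x \<and> a \<in> dualA f l (shorten C) \<and> f dvd (x * p + (\<Sum>i<l. a!i * ps!i))"
    using Cons_dualA_shorten[OF d] dualA_dvd[OF d p] unfolding sum_lessThan_Suc_Cons
    by (simp add: dualA_def vecA_def)
next
  assume "inA f x \<and> a \<in> dualA f l (shorten C) \<and> f dvd (x * p + (\<Sum>i<l. a!i * ps!i))"
  then have x: "inA f x" and a: "a \<in> dualA f l (shorten C)"
    and fp: "f dvd (x * p + (\<Sum>i<l. a!i * ps!i))" by simp_all
  have "(\<Sum>i<Suc l. (x # a)!i * c!i) mod f = 0" if c: "c \<in> C" for c
  proof -
    obtain y c' where yc: "c = y # c'" using code_length[OF C c] by (cases c) auto
    moreover obtain q where "y = p * q" using p_dvd c yc by fastforce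
    ultimately have qc: "c = p * q # c'" by simp
    have "x * (p * q) + (\<Sum>i<l. a!i * c'!i) = q * (x * p + (\<Sum>i<l. a!i * ps!i))
        + ((\<Sum>i<l. a!i * c'!i) - q * (\<Sum>i<l. a!i * ps!i))"
      by (simp add: algebra_simps)
    also have "f dvd \<dots>"
      using shorten_dual_sum_dvd[OF C a p c[unfolded qc]] fp by simp
    finally show ?thesis
      unfolding qc sum_lessThan_Suc_Cons by (simp only: dvd_eq_mod_eq_0)
  qed
  then show "x # a \<in> dualA f (Suc l) C"
    using x a by (simp add: dualA_def vecA_def)
qed

lemma pivot_dvd_dual_sum:
  fixes f :: "'a::field poly"
  assumes C: "A_code f (Suc l) C" and f: "f \<noteq> 0"
    and g: "g # gs \<in> C" "g dvd f" and r: "r \<in> dualA f l (shorten C)"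
  shows "g dvd (\<Sum>j<l. r!j * gs!j)"
proof -
  define fg where "fg = f div g"
  have fg: "fg * g = f" "fg \<noteq> 0" using g(2) f by (auto simp: fg_def)
  have "map (\<lambda>x. (fg * x) mod f) (g # gs) \<in> C" using code_smult[OF C g(1)] .
  then have "map (\<lambda>x. (fg * x) mod f) gs \<in> shorten C" using fg by (simp add: shorten_def)
  from dualA_dvd[OF r this] have "f dvd (\<Sum>j<l. r!j * ((fg * gs!j) mod f))"
    using code_length[OF C g(1)] by simp
  then have "fg * g dvd fg * (\<Sum>j<l. r!j * gs!j)"
    using sum_mult_mod_eq[where n = l and a = r and b = fg and c = gs and f = f] fg(1)
    by (simp add: dvd_eq_mod_eq_0)
  then show ?thesis using fg(2) by simp
qed

section \<open>The output of gen-mat-dual\<close>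

definition lower_echelon :: "'a::field poly list set \<Rightarrow> nat \<Rightarrow> 'a poly list list \<Rightarrow> bool" where
  "lower_echelon E l H \<longleftrightarrow> length H = l \<and> (\<forall>i<l. H!i \<in> E) \<and>
     (\<forall>i<l. \<forall>j<l. i < j \<longrightarrow> H!i!j = 0) \<and>
     (\<forall>i<l. \<forall>d\<in>E. (\<forall>j<l. i < j \<longrightarrow> d!j = 0) \<longrightarrow> H!i!i dvd d!i) \<and>
     (\<forall>i<l. H!i!i = 0 \<longrightarrow> (\<forall>j<l. H!i!j = 0)) \<and>
     (\<forall>i<l. H!i!i = 0 \<or> lead_coeff (H!i!i) = 1) \<and>
     (\<forall>i<l. \<forall>q<i. H!q!q \<noteq> 0 \<longrightarrow> H!i!q = 0 \<or> degree (H!i!q) < degree (H!q!q))"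

lemma lower_echelon_Cons:
  fixes f :: "'a::field poly"
  assumes H': "lower_echelon (dualA f l (shorten C)) l H'"
    and h: "h # replicate l 0 \<in> dualA f (Suc l) C"
    and h_dvd: "\<forall>x. x # replicate l 0 \<in> dualA f (Suc l) C \<longrightarrow> h dvd x"
    and h_monic: "h = 0 \<or> lead_coeff h = 1"
    and \<alpha>: "\<forall>r\<in>dualA f l (shorten C). \<alpha> r # r \<in> dualA f (Suc l) C"
    and \<alpha>_zero: "\<forall>r. (\<forall>j<l. r!j = 0) \<longrightarrow> \<alpha> r = 0"
    and \<alpha>_degree: "\<forall>r. h \<noteq> 0 \<longrightarrow> \<alpha> r = 0 \<or> degree (\<alpha> r) < degree h"
  shows "lower_echelon (dualA f (Suc l) C) (Suc l) ((h # replicate l 0) # map (\<lambda>r. \<alpha> r # r) H')"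
    (is "lower_echelon ?E _ ?H")
proof -
  have len: "length H' = l"
    and H'_rows: "\<forall>i<l. H'!i \<in> dualA f l (shorten C)"
    and H'_upper: "\<forall>i<l. \<forall>j<l. i < j \<longrightarrow> H'!i!j = 0"
    and H'_dvd: "\<forall>i<l. \<forall>d\<in>dualA f l (shorten C). (\<forall>j<l. i < j \<longrightarrow> d!j = 0) \<longrightarrow> H'!i!i dvd d!i"
    and H'_zero: "\<forall>i<l. H'!i!i = 0 \<longrightarrow> (\<forall>j<l. H'!i!j = 0)"
    and H'_monic: "\<forall>i<l. H'!i!i = 0 \<or> lead_coeff (H'!i!i) = 1"
    and H'_reduced: "\<forall>i<l. \<forall>q<i. H'!q!q \<noteq> 0 \<longrightarrow> H'!i!q = 0 \<or> degree (H'!i!q) < degree (H'!q!q)"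
    using H' by (simp_all add: lower_echelon_def)
  have HS: "?H!Suc i = \<alpha> (H'!i) # H'!i" if "i < l" for i
    using that len by simp
  have dual_Cons: "\<exists>x a. d = x # a \<and> a \<in> dualA f l (shorten C)" if "d \<in> ?E" for d
    using that dualA_length[OF that] Cons_dualA_shorten by (cases d) auto
  show ?thesis
    unfolding lower_echelon_def
  proof (intro conjI allI impI ballI)
    show "length ?H = Suc l" using len by simp
  next
    fix i assume "i < Suc l"
    then show "?H!i \<in> ?E"
      using h \<alpha> H'_rows HS by (cases i) auto
  next
    fix i j assume ij: "i < Suc l" "j < Suc l" "i < j"
    then obtain j' where j: "j = Suc j'" "j' < l" by (cases j) auto
    show "?H!i!j = 0"
    proof (cases i)
      case (Suc i')
      then show ?thesis using ij j HS[of i'] H'_upper by simp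
    qed (simp add: j)
  next
    fix i d assume i: "i < Suc l" and d: "d \<in> ?E" and d_zero: "\<forall>j<Suc l. i < j \<longrightarrow> d!j = 0"
    obtain x a where xa: "d = x # a" and a: "a \<in> dualA f l (shorten C)"
      using dual_Cons[OF d] by blast
    show "?H!i!i dvd d!i"
    proof (cases i)
      case 0
      then have "a = replicate l 0"
        using d_zero xa dualA_length[OF a] by (intro nth_equalityI) auto
      then show ?thesis using h_dvd d xa 0 by simp
    next
      case (Suc i')
      have "\<forall>j<l. i' < j \<longrightarrow> a!j = 0" using d_zero xa Suc by auto
      then have "H'!i'!i' dvd a!i'" using H'_dvd a Suc i by simp
      then show ?thesis using HS Suc xa i by simp
    qed
  next
    fix i j assume i: "i < Suc l" and z: "?H!i!i = 0" and j: "j < Suc l"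
    show "?H!i!j = 0"
    proof (cases i)
      case 0
      then show ?thesis using z j by (cases j) auto
    next
      case (Suc i')
      then have i': "i' < l" using i by simp
      then have "\<forall>j<l. H'!i'!j = 0" using H'_zero z HS[OF i'] Suc by simp
      then show ?thesis using \<alpha>_zero HS[OF i'] Suc j by (cases j) auto
    qed
  next
    fix i assume "i < Suc l"
    then show "?H!i!i = 0 \<or> lead_coeff (?H!i!i) = 1"
      using h_monic H'_monic HS by (cases i) auto
  next
    fix i q assume iq: "i < Suc l" "q < i" and nz: "?H!q!q \<noteq> 0"
    then obtain i' where i: "i = Suc i'" "i' < l" by (cases i) auto
    show "?H!i!q = 0 \<or> degree (?H!i!q) < degree (?H!q!q)"
    proof (cases q)
      case 0
      then show ?thesis using \<alpha>_degree nz HS[of i'] i by simp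
    next
      case (Suc q')
      then show ?thesis using H'_reduced nz HS[of i'] HS[of q'] i iq by simp
    qed
  qed
qed

lemma lower_echelon_zero_column:
  fixes f :: "'a::field poly"
  assumes C: "A_code f (Suc l) C" and f: "degree f \<ge> 1" and hd_0: "\<forall>c\<in>C. hd c = 0"
    and H': "lower_echelon (dualA f l (shorten C)) l H'"
  shows "lower_echelon (dualA f (Suc l) C) (Suc l) ((1 # replicate l 0) # map ((#) 0) H')"
proof -
  have "replicate (Suc l) 0 \<in> C" using C by (simp add: A_code_def)
  then have dual: "x # a \<in> dualA f (Suc l) C \<longleftrightarrow> inA f x \<and> a \<in> dualA f l (shorten C)" for x a
    using Cons_in_dualA_iff[OF C, of 0 "replicate l 0"] hd_0 by simp
  have "inA f 1" using f by (simp add: inA_def mod_poly_less)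
  then show ?thesis
    using lower_echelon_Cons[OF H', of 1 "\<lambda>_. 0"]
    by (simp add: dual replicate_in_dualA inA_def)
qed

text \<open>This is where the first entry of the rows of gen-mat-dual comes from.\<close>

lemma pivot_correction_dvd:
  fixes g :: "'a::field poly"
  assumes "g dvd S"
  shows "fg * g dvd ((- S) div g) mod fg * g + S"
proof -
  define k where "k = (- S) div g"
  have kg: "k * g = - S" using assms by (simp add: k_def)
  have "(k mod fg) * g + S = (k - k div fg * fg) * g + S"
    by (simp add: minus_div_mult_eq_mod)
  also have "\<dots> = - (k div fg) * (fg * g)"
    using kg by (simp add: algebra_simps)
  finally show ?thesis by (simp add: k_def)
qed

lemma lower_echelon_pivot_column:
  fixes f :: "'a::field poly"
  assumes f: "lead_coeff f = 1" and C: "A_code f (Suc l) C"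
    and g: "g # gs \<in> C" "lead_coeff g = 1"
    and g_min: "\<forall>w\<in>C. hd w \<noteq> 0 \<longrightarrow> degree g \<le> degree (hd w)"
    and H': "lower_echelon (dualA f l (shorten C)) l H'"
  shows "lower_echelon (dualA f (Suc l) C) (Suc l)
    ((((f div g) mod f) # replicate l 0) #
      map (\<lambda>r. ((- (\<Sum>j<l. r!j * gs!j)) div g) mod (f div g) # r) H')"
proof -
  have f0: "f \<noteq> 0" and g0: "g \<noteq> 0" using f g(2) by auto
  have g_dvd: "g dvd y" if "c \<in> C" "f dvd y - hd c" for c y
    using first_pivot_dvd[OF C f0 g(1) g0 g_min that] .
  have "g dvd f" using g_dvd[of "replicate (Suc l) 0" f] C by (simp add: A_code_def)
  define fg where "fg = f div g"
  have fg: "fg * g = f" using \<open>g dvd f\<close> by (simp add: fg_def)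
  then have fg0: "fg \<noteq> 0" and fg_monic: "lead_coeff fg = 1"
    using f0 f g(2) lead_coeff_mult[of fg g] by auto
  have deg: "degree f = degree fg + degree g" using fg fg0 g0 degree_mult_eq by metis
  \<comment> \<open>\<open>(f div g) mod f\<close> vanishes when \<open>g = 1\<close>: then a dual word is determined by its tail.\<close>
  have h: "fg mod f = fg \<or> fg mod f = 0 \<and> fg = f"
  proof (cases "degree g = 0")
    case True
    then have "g = 1" using g(2) by (elim degree_eq_zeroE) simp
    then show ?thesis by (simp add: fg_def)
  next
    case False
    then show ?thesis using deg by (simp add: mod_poly_less)
  qed
  have dual: "x # a \<in> dualA f (Suc l) C \<longleftrightarrow>
      inA f x \<and> a \<in> dualA f l (shorten C) \<and> f dvd (x * g + (\<Sum>i<l. a!i * gs!i))" for x a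
    using Cons_in_dualA_iff[OF C g(1)] g_dvd by simp
  have \<alpha>: "((- (\<Sum>j<l. r!j * gs!j)) div g) mod fg # r \<in> dualA f (Suc l) C"
    if r: "r \<in> dualA f l (shorten C)" for r
  proof -
    define S where "S = (\<Sum>j<l. r!j * gs!j)"
    define k where "k = (- S) div g"
    have "f dvd (k mod fg) * g + S"
      using pivot_correction_dvd[OF pivot_dvd_dual_sum[OF C f0 g(1) \<open>g dvd f\<close> r], of fg] fg
      by (simp add: k_def S_def)
    moreover have "k mod fg = 0 \<or> degree (k mod fg) < degree f"
      using degree_mod_less[OF fg0, of k] deg by linarith
    then have "inA f (k mod fg)" using inA_iff[OF f0] by simp
    ultimately show ?thesis using dual r by (simp add: k_def S_def)
  qed
  show ?thesis
    unfolding fg_def[symmetric]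
  proof (rule lower_echelon_Cons[OF H'])
    show "fg mod f # replicate l 0 \<in> dualA f (Suc l) C"
      using h fg by (auto simp: dual replicate_in_dualA inA_def)
    show "\<forall>x. x # replicate l 0 \<in> dualA f (Suc l) C \<longrightarrow> fg mod f dvd x"
    proof (intro allI impI)
      fix x assume "x # replicate l 0 \<in> dualA f (Suc l) C"
      then have x: "inA f x" "fg * g dvd x * g" by (simp_all add: dual fg)
      then have "fg dvd x" using g0 by simp
      then show "fg mod f dvd x" using h x(1) by (auto simp: inA_def dvd_eq_mod_eq_0)
    qed
    show "fg mod f = 0 \<or> lead_coeff (fg mod f) = 1" using h fg_monic by auto
    show "\<forall>r. fg mod f \<noteq> 0 \<longrightarrow>
        (- (\<Sum>j<l. r!j * gs!j)) div g mod fg = 0 \<or>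
        degree ((- (\<Sum>j<l. r!j * gs!j)) div g mod fg) < degree (fg mod f)"
    proof (intro allI impI)
      fix r assume "fg mod f \<noteq> 0"
      then show "(- (\<Sum>j<l. r!j * gs!j)) div g mod fg = 0 \<or>
          degree ((- (\<Sum>j<l. r!j * gs!j)) div g mod fg) < degree (fg mod f)"
        using h degree_mod_less[OF fg0, of "(- (\<Sum>j<l. r!j * gs!j)) div g"] by auto
    qed
  qed (use \<alpha> in simp_all)
qed

lemma idmat_Suc: "idmat (Suc n) = (1 # replicate n 0) # map ((#) 0) (idmat n)"
  by (simp add: idmat_def upt_conv_Cons map_Suc_upt[symmetric] map_replicate_const o_def del: upt_Suc)

lemma gen_mat_dual_Nil: "gen_mat_dual f n [] = idmat n"
proof (induction n)
  case (Suc n)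
  then show ?case by (cases n) (simp_all add: idmat_Suc idmat_def[of 0])
qed (simp add: idmat_def)

lemma gen_mat_dual_zero_column:
  assumes "\<forall>r\<in>set G. hd r = 0"
  shows "gen_mat_dual f (Suc l) G = (1 # replicate l 0) # map ((#) 0) (gen_mat_dual f l (map tl G))"
  using assms by (cases l) simp_all

lemma gen_mat_dual_pivot_column:
  assumes "G = (g # gs) # G'" "g \<noteq> 0"
  shows "gen_mat_dual f (Suc l) G = (((f div g) mod f) # replicate l 0) #
      map (\<lambda>r. ((- (\<Sum>j<l. r!j * gs!j)) div g) mod (f div g) # r) (gen_mat_dual f l (map tl G'))"
  using assms by (cases l; cases G') (simp_all add: Let_def gen_mat_dual_Nil idmat_def)

lemma gen_mat_dual_lower_echelon:
  fixes f :: "'a::field poly"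
  assumes f: "lead_coeff f = 1" "degree f \<ge> 1"
  shows "A_code f l C \<Longrightarrow> pivot_basis C G \<Longrightarrow> lower_echelon (dualA f l C) l (gen_mat_dual f l G)"
proof (induction l arbitrary: C G)
  case 0
  then show ?case by (simp add: lower_echelon_def)
next
  case (Suc l)
  then have C: "A_code f (Suc l) C" and P: "pivot_basis C G" by simp_all
  have ne: "\<forall>c\<in>C. c \<noteq> []" using code_length[OF C] by fastforce
  have IH: "lower_echelon (dualA f l (shorten C)) l (gen_mat_dual f l (map tl (filter (\<lambda>r. hd r = 0) G)))"
    using Suc.IH[OF A_code_shorten[OF C] pivot_basis_shorten[OF P ne]] .
  show ?case
  proof (cases "\<forall>r\<in>set G. hd r = 0")
    case True
    then have "filter (\<lambda>r. hd r = 0) G = G" by simp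
    then show ?thesis
      using lower_echelon_zero_column[OF C f(2) _ IH] pivot_basis_zero_column[OF P ne True]
      unfolding gen_mat_dual_zero_column[OF True] by simp
  next
    case False
    then obtain r where "r \<in> set G" "hd r \<noteq> 0" by blast
    then obtain g gs G' where G: "G = (g # gs) # G'" and g: "g \<noteq> 0"
      and lead: "leading_at C (g # gs)" and G': "\<forall>y\<in>set G'. hd y = 0"
      using pivot_basis_pivot_column[OF P ne] by blast
    have "g # gs \<in> C" "lead_coeff g = 1"
      using lead g lcoef_eq_hd[of "g # gs"] by (simp_all add: leading_at_def)
    from lower_echelon_pivot_column[OF f(1) C this _ IH]
    show ?thesis
      unfolding gen_mat_dual_pivot_column[OF G g] using G g G' leading_at_hd_degree_le[OF C lead g]
      by simp
  qed
qed

section \<open>Reversal\<close>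

definition upper_echelon :: "'a::field poly list set \<Rightarrow> nat \<Rightarrow> 'a poly list list \<Rightarrow> bool" where
  "upper_echelon E l K \<longleftrightarrow> length K = l \<and> (\<forall>i<l. K!i \<in> E) \<and>
     (\<forall>i<l. \<forall>j<i. K!i!j = 0) \<and>
     (\<forall>i<l. \<forall>e\<in>E. (\<forall>j<i. e!j = 0) \<longrightarrow> K!i!i dvd e!i) \<and>
     (\<forall>i<l. K!i!i = 0 \<longrightarrow> (\<forall>j<l. K!i!j = 0)) \<and>
     (\<forall>i<l. K!i!i = 0 \<or> lead_coeff (K!i!i) = 1) \<and>
     (\<forall>i<l. \<forall>t<i. K!i!i \<noteq> 0 \<longrightarrow> K!t!i = 0 \<or> degree (K!t!i) < degree (K!i!i))"

lemma upper_echelon_rev: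
  assumes H: "lower_echelon E l H" and E: "\<forall>e\<in>E. length e = l"
  shows "upper_echelon (rev ` E) l (map rev (rev H))"
proof -
  define K where "K = map rev (rev H)"
  have len: "length H = l" and rows: "\<forall>i<l. H!i \<in> E"
    and upper: "\<forall>i<l. \<forall>j<l. i < j \<longrightarrow> H!i!j = 0"
    and dvd: "\<forall>i<l. \<forall>d\<in>E. (\<forall>j<l. i < j \<longrightarrow> d!j = 0) \<longrightarrow> H!i!i dvd d!i"
    and zero: "\<forall>i<l. H!i!i = 0 \<longrightarrow> (\<forall>j<l. H!i!j = 0)"
    and monic: "\<forall>i<l. H!i!i = 0 \<or> lead_coeff (H!i!i) = 1"
    and reduced: "\<forall>i<l. \<forall>q<i. H!q!q \<noteq> 0 \<longrightarrow> H!i!q = 0 \<or> degree (H!i!q) < degree (H!q!q)"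
    using H by (simp_all add: lower_echelon_def)
  have K_row: "K!i = rev (H!(l - Suc i))" if "i < l" for i
    using that len by (simp add: K_def rev_nth)
  have K: "K!i!j = H!(l - Suc i)!(l - Suc j)" if "i < l" "j < l" for i j
    using that K_row rows E by (simp add: rev_nth)
  have rev_nth': "rev d ! j = d!(l - Suc j)" if "d \<in> E" "j < l" for d j
    using that E by (simp add: rev_nth)
  have "length K = l" using len by (simp add: K_def)
  moreover have "\<forall>i<l. K!i \<in> rev ` E"
    using K_row rows by simp
  moreover have "\<forall>i<l. \<forall>j<i. K!i!j = 0"
    using K upper by (simp add: diff_less_mono2)
  moreover have "\<forall>i<l. \<forall>e\<in>rev ` E. (\<forall>j<i. e!j = 0) \<longrightarrow> K!i!i dvd e!i"
  proof (intro allI impI ballI)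
    fix i e assume i: "i < l" and e: "e \<in> rev ` E" and e0: "\<forall>j<i. e!j = 0"
    then obtain d where d: "d \<in> E" "e = rev d" by blast
    have "d!j = 0" if "j < l" "l - Suc i < j" for j
      using e0[rule_format, of "l - Suc j"] rev_nth'[OF d(1), of "l - Suc j"] d that by simp
    then show "K!i!i dvd e!i"
      using dvd i d K[OF i i] rev_nth'[OF d(1) i] by simp
  qed
  moreover have "\<forall>i<l. K!i!i = 0 \<longrightarrow> (\<forall>j<l. K!i!j = 0)"
    using zero K by simp
  moreover have "\<forall>i<l. K!i!i = 0 \<or> lead_coeff (K!i!i) = 1"
    using monic K by simp
  moreover have "\<forall>i<l. \<forall>t<i. K!i!i \<noteq> 0 \<longrightarrow> K!t!i = 0 \<or> degree (K!t!i) < degree (K!i!i)"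
    using reduced K by (simp add: diff_less_mono2)
  ultimately show ?thesis
    by (simp add: upper_echelon_def K_def)
qed

lemma upper_echelon_is_CGM:
  assumes K: "upper_echelon E l K" and E: "\<forall>e\<in>E. length e = l"
  shows "is_CGM E (filter nzv K)"
proof -
  have len: "length K = l" and rows: "\<forall>i<l. K!i \<in> E"
    and lower: "\<forall>i<l. \<forall>j<i. K!i!j = 0"
    and dvd: "\<forall>i<l. \<forall>e\<in>E. (\<forall>j<i. e!j = 0) \<longrightarrow> K!i!i dvd e!i"
    and zero: "\<forall>i<l. K!i!i = 0 \<longrightarrow> (\<forall>j<l. K!i!j = 0)"
    and monic: "\<forall>i<l. K!i!i = 0 \<or> lead_coeff (K!i!i) = 1"
    and reduced: "\<forall>i<l. \<forall>t<i. K!i!i \<noteq> 0 \<longrightarrow> K!t!i = 0 \<or> degree (K!t!i) < degree (K!i!i)"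
    using K by (simp_all add: upper_echelon_def)
  have nzv_K: "nzv (K!i) \<longleftrightarrow> K!i!i \<noteq> 0" if "i < l" for i
    using that zero rows E nzv_iff[of "K!i"] by auto
  have lind_K: "lind (K!i) = i" if "i < l" "K!i!i \<noteq> 0" for i
    using that lower rows E by (intro lind_eqI) auto
  have dvd_lind: "K!(lind e)!(lind e) dvd lcoef e" if "e \<in> E" "nzv e" for e
    using that dvd lind_nzv[OF that(2)] E by (simp add: lcoef_def)
  define ps where "ps = filter (\<lambda>i. K!i!i \<noteq> 0) [0..<l]"
  have ps: "i \<in> set ps \<longleftrightarrow> i < l \<and> K!i!i \<noteq> 0" for i
    by (auto simp: ps_def)
  have sorted_ps: "sorted_wrt (<) ps"
    unfolding ps_def by (intro sorted_wrt_filter sorted_wrt_upt)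
  have G: "filter nzv K = map (nth K) ps"
  proof -
    have "filter nzv K = filter nzv (map (nth K) [0..<l])" using len map_nth by metis
    also have "\<dots> = map (nth K) (filter (\<lambda>i. nzv (K!i)) [0..<l])"
      by (simp add: filter_map o_def)
    also have "filter (\<lambda>i. nzv (K!i)) [0..<l] = ps"
      unfolding ps_def by (rule filter_cong) (simp_all add: nzv_K)
    finally show ?thesis .
  qed
  have lind_ps: "map lind (map (nth K) ps) = ps"
    unfolding map_map using lind_K ps by (intro map_idI) auto
  have "pivot_basis E (map (nth K) ps)"
    unfolding pivot_basis_def
  proof (intro conjI ballI impI)
    show "sorted_wrt (<) (map lind (map (nth K) ps))" using lind_ps sorted_ps by simp
  next
    fix g assume "g \<in> set (map (nth K) ps)"
    then obtain i where i: "i < l" "K!i!i \<noteq> 0" and g: "g = K!i" using ps by auto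
    have lcoef: "lcoef g = K!i!i" using lind_K i g by (simp add: lcoef_def)
    have "degree (lcoef g) \<le> degree (lcoef d)" if "d \<in> E" "nzv d" "lind d = lind g" for d
      using dvd_lind[OF that(1,2)] that lind_K i g lcoef lind_nzv[OF that(2)]
      by (auto simp: lcoef_def intro: dvd_imp_degree_le)
    then show "leading_at E g"
      using rows nzv_K monic i g lcoef by (auto simp: leading_at_def)
  next
    fix c assume c: "c \<in> E" "nzv c"
    then have "lind c < l" "lcoef c \<noteq> 0" using lind_nzv[OF c(2)] E by (auto simp: lcoef_def)
    moreover have "K!(lind c)!(lind c) \<noteq> 0" using dvd_lind[OF c] \<open>lcoef c \<noteq> 0\<close> by (metis dvd_0_left)
    ultimately have "lind c \<in> set ps" using ps by simp
    then show "\<exists>g\<in>set (map (nth K) ps). lind c = lind g"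
      using lind_K ps by force
  qed
  moreover have "K!(ps!t)!(ps!i) = 0 \<or> degree (K!(ps!t)!(ps!i)) < degree (K!(ps!i)!(ps!i))"
    if "t < i" "i < length ps" for t i
    using that reduced ps sorted_wrt_nth_less[OF sorted_ps that] nth_mem[OF that(2)] by auto
  moreover have "lind (K!(ps!i)) = ps!i" if "i < length ps" for i
    using lind_K ps nth_mem[OF that] by simp
  ultimately show ?thesis
    unfolding G is_CGM_def using pivot_basis_imp_basis_div by simp
qed

theorem mainTheorem3:
  fixes f :: "'a::{field,finite} poly" and l :: nat
    and C :: "'a poly list set" and G :: "'a poly list list"
  assumes "lead_coeff f = 1"
    and "A_code f l C"
    and "\<exists>u\<in>C. nzv u"
    and "basis_div C G"
  shows "is_CGM (recip_dual f l C)
           (map rev (rev (filter nzv (gen_mat_dual f l G))))"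
proof -
  obtain u x where u: "u \<in> C" "x \<in> set u" "x \<noteq> 0"
    using assms(3) by (auto simp: nzv_def)
  then have "inA f x" using assms(2) by (auto simp: A_code_def vecA_def)
  moreover have "f \<noteq> 0" using assms(1) by auto
  ultimately have "degree x < degree f" using u(3) inA_iff[of f x] by simp
  then have "degree f \<ge> 1" by simp
  then have lower: "lower_echelon (dualA f l C) l (gen_mat_dual f l G)"
    using gen_mat_dual_lower_echelon assms(1,2) basis_div_imp_pivot_basis[OF assms(4)] by blast
  have length: "\<forall>e\<in>dualA f l C. length e = l"
    by (simp add: dualA_length)
  have "is_CGM (recip_dual f l C) (filter nzv (map rev (rev (gen_mat_dual f l G))))"
    unfolding recip_dual_def
    by (rule upper_echelon_is_CGM[OF upper_echelon_rev[OF lower length]]) (simp add: length)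
  then show ?thesis
    by (simp add: rev_filter filter_map o_def)
qed

end
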